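(* Let $\mathbf{s}=(s_1,\ldots,s_l)\in\mathbb{Z}^l$ be admissible, $\theta\in\mathbb{R}$, and $c_{\mathbf{s}}:=(\theta^{|\mathbf{s}|}\eta_{\mathbf{s}})^\ast$. Define the $|\mathbf{s}|\times|\mathbf{s}|$ matrices $$N_0:=\mathrm{diag}\big(J_{s_1},J_{s_2},\ldots,J_{s_l}\big),\qquad N_1:=I^+_{|\mathbf{s}|}-N_0+\theta^{|\mathbf{s}|}e_{|\mathbf{s}|}e_1^T,$$ where $J_k\in\mathbb{R}^{k\times k}$ and $I^+_{|\mathbf{s}|}\in\mathbb{R}^{|\mathbf{s}|\times|\mathbf{s}|}$ denote the matrices that are zero except for ones on the first superdiagonal, and $e_i\in\mathbb{R}^{|\mathbf{s}|}$ is the $i$-th standard basis vector. Set $z_0:=e_1$ and $C:=e_1^T$. Then $(\mu,\gamma,\lambda)$ with $\mu(x_0)=N_0$, $\mu(x_1)=N_1$, $\gamma=z_0$, $\lambda=C$ is a linear representation of $c_{\mathbf{s}}$, i.e. for every word $\eta=x_{i_1}\cdots x_{i_k}\in X^\ast$, $$(c_{\mathbf{s}},\eta)=C\,N_{i_1}N_{i_2}\cdots N_{i_k}\,z_0 .$$ Consequently the bilinear system $(N_0,N_1,z_0,C)$, driven by the inputs $\bar u_0=1$, $\bar u_1=\mathrm{Li}_0$ with respect to the measure $d\tau/\tau$, realizes $\mathcal{L}_{\mathbf{s}}(t,\theta)=F_{c_{\mathbf{s}}}[\mathrm{Li}_0](t)$ for $t\in[0,1]$: the output is $y(t)=C z(t)=\mathcal{L}_{\mathbf{s}}(t,\theta)$,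 where $z(t):=\sum_{\eta=x_{i_1}\cdots x_{i_k}\in X^\ast}N_{i_1}\cdots N_{i_k}z_0\,E_\eta(t)$.
   Context: A vector $\mathbf{s}=(s_1,\ldots,s_l)\in\mathbb{Z}^l$ is admissible if $s_1\ge 2$ and $s_i\ge 1$ for $i\ge 2$; its weight is $|\mathbf{s}|=s_1+\cdots+s_l$. $\mathrm{Li}_{\mathbf{s}}(t)=\sum_{k_1>\cdots>k_l\ge 1}\frac{t^{k_1}}{k_1^{s_1}\cdots k_l^{s_l}}$, $\{\mathbf{s}\}^n$ is the $n$-fold concatenation of $\mathbf{s}$ with $\mathrm{Li}_{\{\mathbf{s}\}^0}:=1$, and $\mathcal{L}_{\mathbf{s}}(t,\theta):=\sum_{n\ge0}\mathrm{Li}_{\{\mathbf{s}\}^n}(t)\theta^{n|\mathbf{s}|}$. $X=\{x_0,x_1\}$, $X^\ast$ is the free monoid of words, series $c\in\mathbb{R}\langle\langle X\rangle\rangle$ are written $\sum_\eta (c,\eta)\eta$, and for a series $d$ with zero constant term $d^\ast=\sum_{i\ge0}d^i$. $\eta_{\mathbf{s}}:=x_0^{s_1-1}x_1\cdots x_0^{s_l-1}x_1$. A linear representation of $c$ is a triple $(\mu,\gamma,\lambda)$ with $\mu:X^\ast\to\mathbb{R}^{n\times n}$ a monoid morphism and $\gamma,\lambda^T\in\mathbb{R}^{n}$ such that $(c,\eta)=\lambda\mu(\eta)\gamma$ for all words $\eta$. Iterated integrals: $E_\emptyset=1$, $E_{x_i\xi}(t)=\int_0^t\bar u_i(\tau)E_\xi(\tau)\frac{d\tau}{\tau}$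 with $\bar u_0=1$, $\bar u_1(\tau)=\mathrm{Li}_0(\tau)=\tau/(1-\tau)$; $F_c[\mathrm{Li}_0](t)=\sum_\eta(c,\eta)E_\eta(t)$. *)

theory Defs
  imports "HOL-Analysis.Analysis" "Jordan_Normal_Form.Matrix"
begin

datatype letter = X0 | X1

type_synonym word = "letter list"
type_synonym series = "word \<Rightarrow> real"   (* (c, eta) = c eta *)

definition admissible :: "nat list \<Rightarrow> bool" where
  "admissible s \<longleftrightarrow> s \<noteq> [] \<and> hd s \<ge> 2 \<and> (\<forall>k\<in>set s. k \<ge> 1)"

definition weight :: "nat list \<Rightarrow> nat" where
  "weight s = sum_list s"

definition eta :: "nat list \<Rightarrow> word" where
  "eta s = concat (map (\<lambda>k. replicate (k - 1) X0 @ [X1]) s)"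

definition Li :: "nat list \<Rightarrow> real \<Rightarrow> real" where
  "Li s t = (if s = [] then 1 else
     infsum (\<lambda>ks. t ^ hd ks / prod_list (map2 (\<lambda>k e. real k ^ e) ks s))
       {ks. length ks = length s \<and> sorted_wrt (>) ks \<and> (\<forall>k\<in>set ks. k \<ge> 1)})"

definition rep :: "nat \<Rightarrow> nat list \<Rightarrow> nat list" where
  "rep n s = concat (replicate n s)"

definition Lcal :: "nat list \<Rightarrow> real \<Rightarrow> real \<Rightarrow> real" where
  "Lcal s t \<theta> = (\<Sum>n. Li (rep n s) t * \<theta> ^ (n * weight s))"

definition smono :: "real \<Rightarrow> word \<Rightarrow> series" where
  "smono a w = (\<lambda>v. if v = w then a else 0)"

definition smult :: "series \<Rightarrow> series \<Rightarrow> series" where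
  "smult c d = (\<lambda>w. \<Sum>i\<le>length w. c (take i w) * d (drop i w))"

primrec spow :: "series \<Rightarrow> nat \<Rightarrow> series" where
  "spow d 0 = smono 1 []"
| "spow d (Suc n) = smult d (spow d n)"

(* d^* = sum_{i>=0} d^i ; for d with zero constant term, d^i vanishes on words
   shorter than i, so the coefficient of w is the finite sum over i <= |w| *)
definition sstar :: "series \<Rightarrow> series" where
  "sstar d = (\<lambda>w. \<Sum>i\<le>length w. spow d i w)"

definition c_s :: "real \<Rightarrow> nat list \<Rightarrow> series" where
  "c_s \<theta> s = sstar (smono (\<theta> ^ weight s) (eta s))"

definition Jmat :: "nat \<Rightarrow> real mat" where
  "Jmat k = mat k k (\<lambda>(i, j). if j = i + 1 then 1 else 0)"

definition Iplus :: "nat \<Rightarrow> real mat" where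
  "Iplus n = mat n n (\<lambda>(i, j). if j = i + 1 then 1 else 0)"

fun blockdiag :: "real mat list \<Rightarrow> real mat" where
  "blockdiag [] = 0\<^sub>m 0 0"
| "blockdiag (A # As) = (let B = blockdiag As in
     four_block_mat A (0\<^sub>m (dim_row A) (dim_col B)) (0\<^sub>m (dim_row B) (dim_col A)) B)"

definition outer :: "real vec \<Rightarrow> real vec \<Rightarrow> real mat" where
  "outer v w = mat (dim_vec v) (dim_vec w) (\<lambda>(i, j). v $ i * w $ j)"

(* e_i (1-indexed) in R^n *)
definition e :: "nat \<Rightarrow> nat \<Rightarrow> real vec" where
  "e n i = unit_vec n (i - 1)"

definition N0 :: "nat list \<Rightarrow> real mat" where
  "N0 s = blockdiag (map Jmat s)"

definition N1 :: "real \<Rightarrow> nat list \<Rightarrow> real mat" where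
  "N1 \<theta> s = Iplus (weight s) - N0 s
      + (\<theta> ^ weight s) \<cdot>\<^sub>m outer (e (weight s) (weight s)) (e (weight s) 1)"

definition mu_word :: "nat \<Rightarrow> (letter \<Rightarrow> real mat) \<Rightarrow> word \<Rightarrow> real mat" where
  "mu_word n m w = foldr (\<lambda>x M. m x * M) w (1\<^sub>m n)"

definition linear_rep :: "series \<Rightarrow> nat \<Rightarrow> (letter \<Rightarrow> real mat) \<Rightarrow> real vec \<Rightarrow> real vec \<Rightarrow> bool" where
  "linear_rep c n m \<gamma> lam \<longleftrightarrow>
     (\<forall>x. m x \<in> carrier_mat n n) \<and> \<gamma> \<in> carrier_vec n \<and> lam \<in> carrier_vec n \<and>
     (\<forall>w. c w = scalar_prod lam (mu_word n m w *\<^sub>v \<gamma>))"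

definition Li0 :: "real \<Rightarrow> real" where
  "Li0 \<tau> = \<tau> / (1 - \<tau>)"

definition ubar :: "letter \<Rightarrow> real \<Rightarrow> real" where
  "ubar x \<tau> = (case x of X0 \<Rightarrow> 1 | X1 \<Rightarrow> Li0 \<tau>)"

primrec E :: "word \<Rightarrow> real \<Rightarrow> real" where
  "E [] t = 1"
| "E (x # w) t = integral {0..t} (\<lambda>\<tau>. ubar x \<tau> * E w \<tau> / \<tau>)"

(* F_c[Li0](t) = sum_eta (c, eta) E_eta(t), as an (unordered) sum over all words *)
definition Fc_has_value :: "series \<Rightarrow> real \<Rightarrow> real \<Rightarrow> bool" where
  "Fc_has_value c t y \<longleftrightarrow> ((\<lambda>w. c w * E w t) has_sum y) UNIV"

end

theory Submission
  imports Defs "HOL-Analysis.Harmonic_Numbers"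
begin

text \<open>
  The coefficient \<open>(c\<^sub>s, w)\<close> is \<open>\<theta>\<^sup>n\<^sup>|\<^sup>s\<^sup>|\<close> if \<open>w = \<eta>\<^sub>s\<^sup>n\<close> and \<open>0\<close> otherwise. The matrices \<open>N\<^sub>0, N\<^sub>1\<close>
  are the transition matrices of the cyclic automaton reading \<open>\<eta>\<^sub>s\<close>: the \<open>i\<close>-th entry of
  \<open>N\<^sub>w z\<^sub>0\<close> is \<open>(c\<^sub>s, \<eta>\<^sub>1\<dots>\<eta>\<^sub>i w)\<close>, so the first entry is \<open>(c\<^sub>s, w)\<close>.

  For the analytic part, every \<open>E\<^sub>w\<close> with \<open>w\<close> ending in \<open>x\<^sub>1\<close> is a power series with nonnegative
  coefficients, obtained termwise from \<open>\<integral>\<^sub>0\<^sup>t \<tau>\<^sup>k d\<tau>/\<tau> = t\<^sup>k/k\<close> and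
  \<open>\<tau>/(1-\<tau>) = \<Sum> \<tau>\<^sup>k\<close>; for \<open>w = \<eta>\<^sub>s\<^sup>n\<close> this series is \<open>Li\<^bsub>{s}\<^sup>n\<^esub>\<close>. The series \<open>\<L>\<^sub>s\<close> converges
  absolutely because \<open>Li\<^bsub>{s}\<^sup>n\<^esub>(1) \<le> B\<^sup>n/n!\<close>: each copy of \<open>s\<close> contributes a factor at most
  \<open>H\<^bsub>k-1\<^esub>\<^sup>l\<^sup>-\<^sup>1/k\<^sup>2\<close> at its leading index \<open>k\<close> (here \<open>s\<^sub>1 \<ge> 2\<close> is used), and these leading indices
  decrease strictly.
\<close>

unbundle no vec_syntax

section \<open>The word \<open>\<eta>\<^sub>s\<close> and the matrices \<open>N\<^sub>0\<close>, \<open>N\<^sub>1\<close>\<close>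

text \<open>\<open>block_end s j\<close> holds iff \<open>j\<close> is one of the partial sums \<open>0, s\<^sub>1, s\<^sub>1+s\<^sub>2, \<dots>\<close>;
  beyond \<open>sum_list s\<close> it is junk (always true).\<close>

fun block_end :: "nat list \<Rightarrow> nat \<Rightarrow> bool" where
  "block_end [] j = True"
| "block_end (q # r) j = (j = 0 \<or> (j \<ge> q \<and> block_end r (j - q)))"

lemma block_end_sum_list: "block_end s (sum_list s)"
  by (induction s) auto

lemma block_end_0: "block_end s 0"
  by (cases s) auto

lemma blockdiag_map_Jmat:
  "blockdiag (map Jmat s) = mat (sum_list s) (sum_list s)
     (\<lambda>(i, j). if j = Suc i \<and> \<not> block_end s j then 1 else 0)"
proof (induction s)
  case Nil
  then show ?case by (auto simp: zero_mat_def)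
next
  case (Cons q r)
  show ?case
    by (simp only: list.map blockdiag.simps Let_def Cons.IH, rule eq_matI)
      (auto simp: block_end_0 Jmat_def Suc_diff_le)
qed

lemma N0_eq_mat: "N0 s = mat (weight s) (weight s)
     (\<lambda>(i, j). if j = Suc i \<and> \<not> block_end s j then 1 else 0)"
  unfolding N0_def weight_def by (rule blockdiag_map_Jmat)

lemma N1_eq_mat: "N1 \<theta> s = mat (weight s) (weight s)
     (\<lambda>(i, j). (if j = Suc i \<and> block_end s j then 1 else 0)
             + (if i = weight s - 1 \<and> j = 0 then \<theta> ^ weight s else 0))"
  unfolding N1_def N0_eq_mat Iplus_def outer_def e_def
  by (rule eq_matI) auto

lemma eta_Cons: "eta (q # r) = replicate (q - 1) X0 @ X1 # eta r"
  by (simp add: eta_def)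

lemma eta_append: "eta (xs @ ys) = eta xs @ eta ys"
  by (simp add: eta_def)

lemma length_eta: "\<forall>k\<in>set s. k \<ge> 1 \<Longrightarrow> length (eta s) = weight s"
  by (induction s) (auto simp: eta_def weight_def)

lemma weight_pos: "\<forall>k\<in>set s. k \<ge> 1 \<Longrightarrow> s \<noteq> [] \<Longrightarrow> weight s > 0"
  by (cases s) (auto simp: weight_def)

lemma eta_eq_Nil_iff: "\<forall>k\<in>set s. k \<ge> 1 \<Longrightarrow> eta s = [] \<longleftrightarrow> s = []"
  by (cases s) (auto simp: eta_Cons eta_def)

lemma nth_eta:
  assumes "\<forall>k\<in>set s. k \<ge> 1" "i < weight s"
  shows "eta s ! i = (if block_end s (Suc i) then X1 else X0)"
  using assms
proof (induction s arbitrary: i)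
  case Nil
  then show ?case by (simp add: weight_def)
next
  case (Cons q r)
  have q: "q \<ge> 1" using Cons.prems by auto
  show ?case
  proof (cases "i < q")
    case True
    then show ?thesis using q by (auto simp: eta_Cons nth_append block_end_0)
  next
    case False
    have "eta (q # r) = (replicate (q - 1) X0 @ [X1]) @ eta r" by (simp add: eta_Cons)
    then have "eta (q # r) ! i = eta r ! (i - q)"
      using False q by (simp only: nth_append) simp
    moreover have "block_end (q # r) (Suc i) = block_end r (Suc (i - q))"
      using False by (simp add: Suc_diff_le)
    ultimately show ?thesis using Cons False by (auto simp: weight_def)
  qed
qed

section \<open>The coefficients of \<open>c\<^sub>s\<close>\<close>

definition list_pow :: "'a list \<Rightarrow> nat \<Rightarrow> 'a list" where
  "list_pow u n = concat (replicate n u)"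

lemma list_pow_0 [simp]: "list_pow u 0 = []"
  by (simp add: list_pow_def)

lemma list_pow_Suc: "list_pow u (Suc n) = u @ list_pow u n"
  by (simp add: list_pow_def)

lemma length_list_pow: "length (list_pow u n) = n * length u"
  by (induction n) (auto simp: list_pow_Suc)

lemma list_pow_inject: "u \<noteq> [] \<Longrightarrow> list_pow u n = list_pow u m \<Longrightarrow> n = m"
  by (metis length_list_pow length_greater_0_conv mult_right_cancel neq0_conv)

lemma eta_rep: "eta (rep n s) = list_pow (eta s) n"
  by (induction n) (auto simp: rep_def list_pow_def eta_append eta_def)

lemma smult_smono: "smult (smono a u) (smono b v) = smono (a * b) (u @ v)"
proof
  fix w :: word
  have "(if take i w = u then a else 0) * (if drop i w = v then b else 0) =
        (if w = u @ v \<and> i = length u then a * b else 0)" if "i \<le> length w" for i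
    using that append_take_drop_id[of i w] by auto
  then have "smult (smono a u) (smono b v) w =
      (\<Sum>i\<le>length w. if w = u @ v \<and> i = length u then a * b else 0)"
    unfolding smult_def smono_def by (intro sum.cong) auto
  also have "\<dots> = smono (a * b) (u @ v) w"
    by (auto simp: smono_def)
  finally show "smult (smono a u) (smono b v) w = smono (a * b) (u @ v) w" .
qed

lemma spow_smono: "spow (smono a u) n = smono (a ^ n) (list_pow u n)"
  by (induction n) (auto simp: smult_smono list_pow_Suc)

lemma c_s_apply:
  "c_s \<theta> s w = (\<Sum>i\<le>length w. if w = list_pow (eta s) i then (\<theta> ^ weight s) ^ i else 0)"
  unfolding c_s_def sstar_def spow_smono by (rule sum.cong) (auto simp: smono_def)

lemma c_s_list_pow:
  assumes "eta s \<noteq> []"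
  shows "c_s \<theta> s (list_pow (eta s) n) = (\<theta> ^ weight s) ^ n"
proof -
  have "c_s \<theta> s (list_pow (eta s) n) =
      (\<Sum>i\<le>length (list_pow (eta s) n). if i = n then (\<theta> ^ weight s) ^ i else 0)"
    unfolding c_s_apply using list_pow_inject[OF assms] by (intro sum.cong) auto
  moreover have "n \<le> length (list_pow (eta s) n)"
    using assms by (simp add: length_list_pow Suc_le_eq)
  ultimately show ?thesis by simp
qed

lemma c_s_eq_0: "w \<notin> range (list_pow (eta s)) \<Longrightarrow> c_s \<theta> s w = 0"
  unfolding c_s_apply by (intro sum.neutral) auto

lemma c_s_eta_append:
  assumes "eta s \<noteq> []"
  shows "c_s \<theta> s (eta s @ w) = \<theta> ^ weight s * c_s \<theta> s w"
proof (cases "w \<in> range (list_pow (eta s))")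
  case True
  then obtain n where "w = list_pow (eta s) n" by blast
  then show ?thesis
    using c_s_list_pow[OF assms, of _ "Suc n"] c_s_list_pow[OF assms, of _ n]
    by (simp add: list_pow_Suc)
next
  case False
  have "eta s @ w \<notin> range (list_pow (eta s))"
  proof
    assume "eta s @ w \<in> range (list_pow (eta s))"
    then obtain m where m: "eta s @ w = list_pow (eta s) m" by blast
    with assms obtain k where "m = Suc k" by (cases m) auto
    with m have "w = list_pow (eta s) k" by (simp add: list_pow_Suc)
    with False show False by blast
  qed
  then show ?thesis using False by (simp add: c_s_eq_0)
qed

lemma c_s_mismatch:
  assumes "i < length (eta s)" "x \<noteq> eta s ! i"
  shows "c_s \<theta> s (take i (eta s) @ x # w) = 0"
proof (rule c_s_eq_0, rule notI)
  assume "take i (eta s) @ x # w \<in> range (list_pow (eta s))"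
  then obtain m where m: "take i (eta s) @ x # w = list_pow (eta s) m" by blast
  then obtain k where "m = Suc k" by (cases m) auto
  then have "list_pow (eta s) m ! i = eta s ! i"
    using assms by (simp add: list_pow_Suc nth_append)
  moreover have "(take i (eta s) @ x # w) ! i = x"
    using assms by (simp add: nth_append)
  ultimately show False using m assms by simp
qed

lemma c_s_take_eta:
  assumes "i < length (eta s)"
  shows "c_s \<theta> s (take i (eta s)) = (if i = 0 then 1 else 0)"
proof (cases "i = 0")
  case True
  then show ?thesis using c_s_list_pow[of s \<theta> 0] assms by auto
next
  case False
  have "take i (eta s) \<notin> range (list_pow (eta s))"
  proof
    assume "take i (eta s) \<in> range (list_pow (eta s))"
    then obtain m where "take i (eta s) = list_pow (eta s) m" by blast
    then have "length (take i (eta s)) = length (list_pow (eta s) m)" by simp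
    then have "i = m * length (eta s)"
      using assms by (simp add: length_list_pow)
    then show False using assms False by (cases m) auto
  qed
  then show ?thesis using False by (simp add: c_s_eq_0)
qed

section \<open>The linear representation\<close>

definition letter_mat :: "real \<Rightarrow> nat list \<Rightarrow> letter \<Rightarrow> real mat" where
  "letter_mat \<theta> s = (\<lambda>x. case x of X0 \<Rightarrow> N0 s | X1 \<Rightarrow> N1 \<theta> s)"

lemma letter_mat_carrier: "letter_mat \<theta> s x \<in> carrier_mat (weight s) (weight s)"
  by (cases x) (auto simp: letter_mat_def N0_eq_mat N1_eq_mat)

lemma mu_word_Cons: "mu_word n m (x # w) = m x * mu_word n m w"
  by (simp add: mu_word_def)

lemma mu_word_carrier:
  assumes "\<And>x. m x \<in> carrier_mat n n"
  shows "mu_word n m w \<in> carrier_mat n n"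
  by (induction w) (auto simp: mu_word_def intro: mult_carrier_mat[OF assms])

lemma mu_word_letter_mat_carrier:
  "mu_word (weight s) (letter_mat \<theta> s) w \<in> carrier_mat (weight s) (weight s)"
  by (rule mu_word_carrier) (rule letter_mat_carrier)

lemma mult_mat_vec_nth:
  assumes "i < n" "dim_vec v = n"
  shows "(mat n n f *\<^sub>v v) $ i = (\<Sum>j<n. f (i, j) * v $ j)"
  using assms by (simp add: scalar_prod_def row_def lessThan_atLeast0)

context
  fixes s :: "nat list" and \<theta> :: real and w :: word and v :: "real vec"
  assumes pos: "\<forall>k\<in>set s. k \<ge> 1" and ne: "s \<noteq> []"
    and dim_v: "dim_vec v = weight s"
    and v_nth: "\<And>j. j < weight s \<Longrightarrow> v $ j = c_s \<theta> s (take j (eta s) @ w)"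
begin

lemma N0_mult_state:
  assumes i: "i < weight s"
  shows "(N0 s *\<^sub>v v) $ i = c_s \<theta> s (take i (eta s) @ X0 # w)"
proof -
  have "(N0 s *\<^sub>v v) $ i = (\<Sum>j<weight s. (if j = Suc i \<and> \<not> block_end s j then 1 else 0) * v $ j)"
    using i dim_v by (simp add: N0_eq_mat mult_mat_vec_nth del: index_mult_mat_vec)
  also have "\<dots> = (\<Sum>j<weight s. if j = Suc i then (if \<not> block_end s j then v $ j else 0) else 0)"
    by (rule sum.cong) auto
  also have "\<dots> = (if Suc i < weight s \<and> \<not> block_end s (Suc i) then v $ Suc i else 0)"
    by (simp add: sum.delta)
  also have "\<dots> = c_s \<theta> s (take i (eta s) @ X0 # w)"
  proof (cases "block_end s (Suc i)")
    case True
    then show ?thesis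
      using c_s_mismatch[of i s X0 \<theta> w] i nth_eta[OF pos i] length_eta[OF pos] by simp
  next
    case False
    then have "Suc i < weight s"
      using block_end_sum_list[of s] i by (metis Suc_lessI weight_def)
    then show ?thesis
      using False v_nth nth_eta[OF pos i] length_eta[OF pos] by (simp add: take_Suc_conv_app_nth)
  qed
  finally show ?thesis .
qed

lemma N1_mult_state:
  assumes i: "i < weight s"
  shows "(N1 \<theta> s *\<^sub>v v) $ i = c_s \<theta> s (take i (eta s) @ X1 # w)"
proof -
  have W: "weight s > 0" using weight_pos[OF pos ne] .
  have "(N1 \<theta> s *\<^sub>v v) $ i = (\<Sum>j<weight s. ((if j = Suc i \<and> block_end s j then 1 else 0)
      + (if i = weight s - 1 \<and> j = 0 then \<theta> ^ weight s else 0)) * v $ j)"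
    using i dim_v by (simp add: N1_eq_mat mult_mat_vec_nth del: index_mult_mat_vec)
  also have "\<dots> =
      (\<Sum>j<weight s. if j = Suc i then (if block_end s j then v $ j else 0) else 0)
    + (\<Sum>j<weight s. if j = 0 then (if i = weight s - 1 then \<theta> ^ weight s * v $ j else 0) else 0)"
    by (subst sum.distrib[symmetric], rule sum.cong) (auto simp: algebra_simps)
  also have "\<dots> = (if Suc i < weight s \<and> block_end s (Suc i) then v $ Suc i else 0)
           + (if i = weight s - 1 then \<theta> ^ weight s * v $ 0 else 0)"
    using W by (simp add: sum.delta)
  also have "\<dots> = c_s \<theta> s (take i (eta s) @ X1 # w)"
  proof (cases "block_end s (Suc i)")
    case False
    moreover have "i \<noteq> weight s - 1"
      using False block_end_sum_list[of s] i W by (auto simp: weight_def)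
    ultimately show ?thesis
      using c_s_mismatch[of i s X1 \<theta> w] i nth_eta[OF pos i] length_eta[OF pos] by simp
  next
    case True
    have x: "eta s ! i = X1" using True nth_eta[OF pos i] by simp
    show ?thesis
    proof (cases "Suc i < weight s")
      case True
      then show ?thesis
        using \<open>block_end s (Suc i)\<close> v_nth x length_eta[OF pos] by (simp add: take_Suc_conv_app_nth)
    next
      case False
      then have last: "i = weight s - 1" using i by simp
      have "take i (eta s) @ X1 # w = eta s @ w"
        using last i x length_eta[OF pos] take_Suc_conv_app_nth[of i "eta s"] by simp
      moreover have "eta s \<noteq> []" using eta_eq_Nil_iff[OF pos] ne by simp
      ultimately have "c_s \<theta> s (take i (eta s) @ X1 # w) = \<theta> ^ weight s * c_s \<theta> s w"
        by (metis c_s_eta_append)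
      then show ?thesis using last W v_nth[of 0] by simp
    qed
  qed
  finally show ?thesis .
qed

end

lemma mu_word_state:
  assumes pos: "\<forall>k\<in>set s. k \<ge> 1" and ne: "s \<noteq> []" and i: "i < weight s"
  shows "(mu_word (weight s) (letter_mat \<theta> s) w *\<^sub>v unit_vec (weight s) 0) $ i
           = c_s \<theta> s (take i (eta s) @ w)"
  using i
proof (induction w arbitrary: i)
  case Nil
  then show ?case
    using c_s_take_eta[of i s \<theta>] length_eta[OF pos] by (simp add: mu_word_def)
next
  case (Cons x w)
  let ?v = "mu_word (weight s) (letter_mat \<theta> s) w *\<^sub>v unit_vec (weight s) 0"
  have carrier: "mu_word (weight s) (letter_mat \<theta> s) w \<in> carrier_mat (weight s) (weight s)"
    by (rule mu_word_letter_mat_carrier)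
  then have "mu_word (weight s) (letter_mat \<theta> s) (x # w) *\<^sub>v unit_vec (weight s) 0
      = letter_mat \<theta> s x *\<^sub>v ?v"
    unfolding mu_word_Cons by (intro assoc_mult_mat_vec[OF letter_mat_carrier]) auto
  moreover have "dim_vec ?v = weight s" using carrier by simp
  ultimately show ?case
    using N0_mult_state[OF pos ne _ Cons.IH Cons.prems] N1_mult_state[OF pos ne _ Cons.IH Cons.prems]
    by (cases x) (auto simp: letter_mat_def)
qed

theorem linear_rep_c_s:
  assumes pos: "\<forall>k\<in>set s. k \<ge> 1" and ne: "s \<noteq> []"
  shows "linear_rep (c_s \<theta> s) (weight s) (letter_mat \<theta> s) (e (weight s) 1) (e (weight s) 1)"
  unfolding linear_rep_def
proof (intro conjI allI)
  fix w
  have W: "weight s > 0" using weight_pos[OF pos ne] .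
  have "mu_word (weight s) (letter_mat \<theta> s) w *\<^sub>v unit_vec (weight s) 0 \<in> carrier_vec (weight s)"
    using mu_word_letter_mat_carrier by (rule mult_mat_vec_carrier) simp
  then show "c_s \<theta> s w = scalar_prod (e (weight s) 1)
      (mu_word (weight s) (letter_mat \<theta> s) w *\<^sub>v e (weight s) 1)"
    using mu_word_state[OF pos ne W] by (simp add: e_def scalar_prod_left_unit[OF _ W])
qed (auto simp: e_def letter_mat_carrier)

section \<open>Iterated integrals as power series\<close>

text \<open>Integrating \<open>\<tau>\<^sup>k d\<tau>/\<tau>\<close> divides the \<open>k\<close>-th coefficient by \<open>k\<close>; multiplying by
  \<open>\<tau>/(1 - \<tau>) = \<tau> + \<tau>\<^sup>2 + \<dots>\<close> beforehand replaces it by the sum of the lower coefficients.\<close>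

fun E_coeff :: "word \<Rightarrow> nat \<Rightarrow> real" where
  "E_coeff [] k = (if k = 0 then 1 else 0)"
| "E_coeff (X0 # w) k = (if k = 0 then 0 else E_coeff w k / real k)"
| "E_coeff (X1 # w) k = (if k = 0 then 0 else (\<Sum>j<k. E_coeff w j) / real k)"

definition E_series :: "word \<Rightarrow> real \<Rightarrow> real" where
  "E_series w t = (\<Sum>k. E_coeff w k * t ^ k)"

lemma E_coeff_bounds: "0 \<le> E_coeff w k \<and> E_coeff w k \<le> 1"
proof (induction w arbitrary: k)
  case Nil
  then show ?case by simp
next
  case (Cons x w)
  show ?case
  proof (cases x)
    case X0
    then show ?thesis using Cons[of k]
      by (auto simp: divide_le_eq intro: order_trans[of _ 1])
  next
    case X1
    have "(\<Sum>j<k. E_coeff w j) \<le> (\<Sum>j<k. 1)" by (rule sum_mono) (use Cons in auto)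
    moreover have "0 \<le> (\<Sum>j<k. E_coeff w j)" by (rule sum_nonneg) (use Cons in auto)
    ultimately show ?thesis using X1 by (auto simp: divide_le_eq)
  qed
qed

lemma E_coeff_nonneg: "0 \<le> E_coeff w k"
  using E_coeff_bounds by blast

lemma E_coeff_0: "w \<noteq> [] \<Longrightarrow> E_coeff w 0 = 0"
  by (cases w; cases "hd w") auto

lemma summable_E_coeff_power: "\<bar>t\<bar> < 1 \<Longrightarrow> summable (\<lambda>k. E_coeff w k * t ^ k)"
proof (rule summable_comparison_test[of _ "\<lambda>k. \<bar>t\<bar> ^ k"])
  assume t: "\<bar>t\<bar> < 1"
  show "\<exists>N. \<forall>n\<ge>N. norm (E_coeff w n * t ^ n) \<le> \<bar>t\<bar> ^ n"
    using E_coeff_bounds by (auto simp: abs_mult power_abs intro!: mult_left_le_one_le)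
  show "summable (\<lambda>k. \<bar>t\<bar> ^ k)" using t by simp
qed

lemma E_series_has_derivative:
  assumes "\<bar>x\<bar> < 1"
  shows "DERIV (E_series w) x :> (\<Sum>n. diffs (E_coeff w) n * x ^ n)"
proof -
  have "summable (\<lambda>n. E_coeff w n * ((1 + \<bar>x\<bar>) / 2) ^ n)"
    by (rule summable_E_coeff_power) (use assms in simp)
  from termdiffs_strong[OF this, of x] show ?thesis
    using assms unfolding E_series_def by (simp add: abs_if)
qed

lemma isCont_E_series: "\<bar>x\<bar> < 1 \<Longrightarrow> isCont (E_series w) x"
  using E_series_has_derivative DERIV_isCont by blast

lemma E_series_0: "w \<noteq> [] \<Longrightarrow> E_series w 0 = 0"
  unfolding E_series_def using E_coeff_0 by simp

lemma E_series_Nil: "E_series [] t = 1"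
proof -
  have "(\<lambda>k. E_coeff [] k * t ^ k) = (\<lambda>k. if k = 0 then 1 else 0)" by auto
  moreover have "(\<lambda>k::nat. if k = 0 then 1 else (0::real)) sums 1"
    using sums_single[of 0 "\<lambda>_. 1::real"] by simp
  ultimately show ?thesis unfolding E_series_def by (simp add: sums_iff)
qed

lemma E_series_X0_has_derivative:
  assumes "w \<noteq> []" "0 < x" "x < 1"
  shows "DERIV (E_series (X0 # w)) x :> E_series w x / x"
proof -
  have "summable (\<lambda>n. E_coeff w n * x ^ n)"
    by (rule summable_E_coeff_power) (use assms in simp)
  then have "E_series w x = E_coeff w 0 + (\<Sum>n. E_coeff w (Suc n) * x ^ n) * x"
    unfolding E_series_def by (rule powser_split_head(1))
  then have "(\<Sum>n. E_coeff w (Suc n) * x ^ n) = E_series w x / x"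
    using assms E_coeff_0 by simp
  moreover have "diffs (E_coeff (X0 # w)) n = E_coeff w (Suc n)" for n
    unfolding diffs_def by simp
  ultimately show ?thesis using E_series_has_derivative[of x "X0 # w"] assms by simp
qed

lemma E_series_X1_has_derivative:
  assumes "0 < x" "x < 1"
  shows "DERIV (E_series (X1 # w)) x :> E_series w x / (1 - x)"
proof -
  have diffs: "diffs (E_coeff (X1 # w)) n = (\<Sum>i\<le>n. E_coeff w i * x ^ i * x ^ (n - i)) / x ^ n" for n
  proof -
    have "diffs (E_coeff (X1 # w)) n = (\<Sum>i\<le>n. E_coeff w i)"
      unfolding diffs_def by (simp add: lessThan_Suc_atMost)
    also have "\<dots> = (\<Sum>i\<le>n. E_coeff w i * x ^ i * x ^ (n - i)) / x ^ n"
      using assms by (simp add: sum_divide_distrib mult.assoc power_add[symmetric])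
    finally show ?thesis .
  qed
  have "summable (\<lambda>k. norm (E_coeff w k * x ^ k))"
    using summable_E_coeff_power[of x w] assms E_coeff_nonneg by (simp add: abs_mult)
  moreover have "summable (\<lambda>k. norm (x ^ k))" using assms by simp
  moreover have "E_series w x / (1 - x) = (\<Sum>k. E_coeff w k * x ^ k) * (\<Sum>k. x ^ k)"
    unfolding E_series_def using assms by (simp add: suminf_geometric divide_inverse)
  ultimately have "E_series w x / (1 - x) = (\<Sum>k. \<Sum>i\<le>k. E_coeff w i * x ^ i * x ^ (k - i))"
    by (simp add: Cauchy_product)
  also have "\<dots> = (\<Sum>n. diffs (E_coeff (X1 # w)) n * x ^ n)"
    using assms by (simp add: diffs)
  finally show ?thesis using E_series_has_derivative[of x "X1 # w"] assms by simp
qed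

lemma continuous_on_E_series_01:
  assumes "summable (E_coeff w)"
  shows "continuous_on {0..1} (E_series w)"
proof -
  have "uniform_limit {0..1} (\<lambda>n x. \<Sum>i<n. E_coeff w i * x ^ i)
          (\<lambda>x. \<Sum>i. E_coeff w i * x ^ i) sequentially"
  proof (rule Weierstrass_m_test[OF _ assms])
    fix n and x :: real
    assume "x \<in> {0..1}"
    then show "norm (E_coeff w n * x ^ n) \<le> E_coeff w n"
      using E_coeff_nonneg by (auto simp: abs_mult intro!: mult_left_le power_le_one)
  qed
  then show ?thesis
    unfolding E_series_def
    by (rule uniform_limit_theorem[rotated]) (auto intro!: always_eventually continuous_intros)
qed

text \<open>A trailing \<open>x\<^sub>0\<close> would make \<open>\<integral>\<^sub>0\<^sup>t d\<tau>/\<tau>\<close> diverge; the words \<open>\<eta>\<^sub>s\<^sup>n\<close> all end in \<open>x\<^sub>1\<close>.\<close>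

definition ends_in_X1 :: "word \<Rightarrow> bool" where
  "ends_in_X1 w \<longleftrightarrow> w = [] \<or> last w = X1"

lemma ends_in_X1_Cons: "ends_in_X1 (x # w) \<Longrightarrow> ends_in_X1 w \<and> (x = X0 \<longrightarrow> w \<noteq> [])"
  unfolding ends_in_X1_def by (cases w) auto

lemma ends_in_X1_eta: "ends_in_X1 (eta u)"
  by (induction u) (auto simp: ends_in_X1_def eta_Cons eta_def)

lemma E_Cons_eq_E_series:
  assumes X0_ne: "x = X0 \<Longrightarrow> w \<noteq> []"
    and E_w: "\<And>\<tau>. 0 < \<tau> \<Longrightarrow> \<tau> < 1 \<Longrightarrow> E w \<tau> = E_series w \<tau>"
    and t: "0 \<le> t" "t \<le> 1" and t_1: "t < 1 \<or> summable (E_coeff (x # w))"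
  shows "E (x # w) t = E_series (x # w) t"
proof -
  have cont: "continuous_on {0..t} (E_series (x # w))"
  proof (cases "t < 1")
    case True
    then show ?thesis
      using t by (intro continuous_at_imp_continuous_on ballI isCont_E_series) auto
  next
    case False
    then have "t = 1" "summable (E_coeff (x # w))" using t t_1 by auto
    then show ?thesis using continuous_on_E_series_01 by simp
  qed
  have "DERIV (E_series (x # w)) \<tau> :> ubar x \<tau> * E w \<tau> / \<tau>" if "0 < \<tau>" "\<tau> < 1" for \<tau>
  proof (cases x)
    case X0
    then show ?thesis
      using E_series_X0_has_derivative[OF X0_ne[OF X0] that] E_w[OF that] by (simp add: ubar_def)
  next
    case X1
    then show ?thesis
      using E_series_X1_has_derivative[OF that] E_w[OF that] that by (simp add: ubar_def Li0_def)
  qed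
  then have "(E_series (x # w) has_vector_derivative (ubar x \<tau> * E w \<tau> / \<tau>)) (at \<tau>)"
    if "\<tau> \<in> {0<..<t}" for \<tau>
    using that t by (simp add: has_real_derivative_iff_has_vector_derivative)
  then have "((\<lambda>\<tau>. ubar x \<tau> * E w \<tau> / \<tau>) has_integral
      (E_series (x # w) t - E_series (x # w) 0)) {0..t}"
    by (rule fundamental_theorem_of_calculus_interior[OF t(1) cont])
  then show ?thesis
    using E_series_0[of "x # w"] by (simp add: integral_unique)
qed

lemma E_eq_E_series: "ends_in_X1 w \<Longrightarrow> 0 \<le> t \<Longrightarrow> t < 1 \<Longrightarrow> E w t = E_series w t"
proof (induction w arbitrary: t)
  case Nil
  then show ?case by (simp add: E_series_Nil)
next
  case (Cons x w)
  from ends_in_X1_Cons[OF Cons.prems(1)] have "ends_in_X1 w" "x = X0 \<Longrightarrow> w \<noteq> []" by auto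
  then show ?case
    by (intro E_Cons_eq_E_series Cons.IH) (use Cons.prems in auto)
qed

lemma E_1_eq_E_series:
  assumes "ends_in_X1 w" "w \<noteq> []" "summable (E_coeff w)"
  shows "E w 1 = E_series w 1"
proof -
  obtain x v where w: "w = x # v" using assms(2) by (cases w) auto
  from ends_in_X1_Cons[OF assms(1)[unfolded w]] have "ends_in_X1 v" "x = X0 \<Longrightarrow> v \<noteq> []"
    by auto
  then show ?thesis
    unfolding w by (intro E_Cons_eq_E_series E_eq_E_series) (use assms(3) w in auto)
qed

section \<open>Multiple polylogarithms as power series\<close>

lemma E_coeff_replicate_X0:
  "w \<noteq> [] \<Longrightarrow> E_coeff (replicate m X0 @ w) k = (if k = 0 then 0 else E_coeff w k / real k ^ m)"
  by (induction m) (auto simp: E_coeff_0)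

lemma E_coeff_eta_Cons:
  assumes "q \<ge> 1"
  shows "E_coeff (eta (q # u)) k = (if k = 0 then 0 else (\<Sum>j<k. E_coeff (eta u) j) / real k ^ q)"
proof -
  have "E_coeff (eta (q # u)) k = (if k = 0 then 0 else E_coeff (X1 # eta u) k / real k ^ (q - 1))"
    by (simp add: eta_Cons E_coeff_replicate_X0)
  moreover have "real k * real k ^ (q - 1) = real k ^ q"
    using assms by (metis Suc_diff_le diff_Suc_1 power_Suc)
  ultimately show ?thesis by (simp add: divide_divide_eq_left)
qed

definition Li_index :: "nat list \<Rightarrow> nat list set" where
  "Li_index u = {ks. length ks = length u \<and> sorted_wrt (>) ks \<and> (\<forall>k\<in>set ks. k \<ge> 1)}"

definition Li_index_hd :: "nat list \<Rightarrow> nat \<Rightarrow> nat list set" where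
  "Li_index_hd u k = {ks \<in> Li_index u. hd ks = k}"

definition Li_weight :: "nat list \<Rightarrow> nat list \<Rightarrow> real" where
  "Li_weight u ks = 1 / prod_list (map2 (\<lambda>k e. real k ^ e) ks u)"

lemma Li_weight_Cons: "Li_weight (q # u) (k # ks) = Li_weight u ks / real k ^ q"
  unfolding Li_weight_def by simp

lemma Li_weight_nonneg: "0 \<le> Li_weight u ks"
  unfolding Li_weight_def by (intro divide_nonneg_nonneg prod_list_nonneg) (auto simp: set_zip)

lemma sorted_wrt_greater_le_hd: "sorted_wrt (>) (ks :: nat list) \<Longrightarrow> x \<in> set ks \<Longrightarrow> x \<le> hd ks"
  by (cases ks) (auto intro: less_imp_le)

lemma finite_Li_index_hd: "finite (Li_index_hd u k)"
proof (rule finite_subset)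
  show "Li_index_hd u k \<subseteq> {ks. set ks \<subseteq> {..k} \<and> length ks = length u}"
    unfolding Li_index_hd_def Li_index_def using sorted_wrt_greater_le_hd by fastforce
qed (rule finite_lists_length_eq, simp)

lemma Li_index_hd_single: "Li_index_hd [q] k = (if k \<ge> 1 then {[k]} else {})"
proof -
  have "ks \<in> Li_index_hd [q] k \<longleftrightarrow> ks = [k] \<and> k \<ge> 1" for ks
    unfolding Li_index_hd_def Li_index_def by (cases ks) auto
  then show ?thesis by auto
qed

lemma Li_index_hd_Cons:
  assumes "u \<noteq> []" "k \<ge> 1"
  shows "Li_index_hd (q # u) k = Cons k ` (\<Union>j<k. Li_index_hd u j)"
proof (intro equalityI subsetI)
  fix ks
  assume ks: "ks \<in> Li_index_hd (q # u) k"
  then obtain ks' where ks': "ks = k # ks'"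
    unfolding Li_index_hd_def Li_index_def by (cases ks) auto
  with ks assms have "ks' \<noteq> []" unfolding Li_index_hd_def Li_index_def by auto
  with ks ks' have "hd ks' < k" "ks' \<in> Li_index_hd u (hd ks')"
    unfolding Li_index_hd_def Li_index_def by auto
  with ks' show "ks \<in> Cons k ` (\<Union>j<k. Li_index_hd u j)" by auto
next
  fix ks
  assume "ks \<in> Cons k ` (\<Union>j<k. Li_index_hd u j)"
  then obtain j ks' where ks: "ks = k # ks'" and j: "j < k" and ks': "ks' \<in> Li_index_hd u j"
    by auto
  have "\<forall>x\<in>set ks'. x < k"
    using ks' j sorted_wrt_greater_le_hd[of ks'] unfolding Li_index_hd_def Li_index_def by fastforce
  then show "ks \<in> Li_index_hd (q # u) k"
    using ks' ks assms(2) unfolding Li_index_hd_def Li_index_def by auto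
qed

lemma sum_Li_weight_Li_index_hd:
  assumes "u \<noteq> []" "\<forall>q\<in>set u. q \<ge> 1"
  shows "sum (Li_weight u) (Li_index_hd u k) = E_coeff (eta u) k"
  using assms
proof (induction u arbitrary: k rule: list_nonempty_induct)
  case (single q)
  have "(\<Sum>j<k. E_coeff [] j) = (if k = 0 then 0 else 1)"
    by (cases k) (simp_all add: sum.lessThan_Suc_shift)
  then show ?case
    using single E_coeff_eta_Cons[of q "[]" k]
    by (auto simp: Li_index_hd_single Li_weight_def eta_def)
next
  case (cons q u)
  have q: "q \<ge> 1" using cons.prems by auto
  show ?case
  proof (cases "k \<ge> 1")
    case False
    then have "Li_index_hd (q # u) k = {}"
      unfolding Li_index_hd_def Li_index_def by (force simp: length_Suc_conv)
    then show ?thesis using False q by (simp add: E_coeff_eta_Cons)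
  next
    case True
    have disj: "\<forall>i\<in>{..<k}. \<forall>j\<in>{..<k}. i \<noteq> j \<longrightarrow> Li_index_hd u i \<inter> Li_index_hd u j = {}"
      unfolding Li_index_hd_def by auto
    have "sum (Li_weight (q # u)) (Li_index_hd (q # u) k)
        = (\<Sum>ks\<in>(\<Union>j<k. Li_index_hd u j). Li_weight (q # u) (k # ks))"
      unfolding Li_index_hd_Cons[OF cons.hyps True] by (simp add: sum.reindex)
    also have "\<dots> = (\<Sum>ks\<in>(\<Union>j<k. Li_index_hd u j). Li_weight u ks) / real k ^ q"
      by (simp add: Li_weight_Cons sum_divide_distrib)
    also have "(\<Sum>ks\<in>(\<Union>j<k. Li_index_hd u j). Li_weight u ks)
        = (\<Sum>j<k. sum (Li_weight u) (Li_index_hd u j))"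
      by (rule sum.UNION_disjoint) (use finite_Li_index_hd disj in auto)
    also have "\<dots> = (\<Sum>j<k. E_coeff (eta u) j)"
      using cons.IH cons.prems by simp
    finally show ?thesis using True q by (simp add: E_coeff_eta_Cons)
  qed
qed

lemma Li_eq_E_series:
  assumes u: "u \<noteq> []" "\<forall>q\<in>set u. q \<ge> 1" and t: "0 \<le> t"
    and converges: "summable (\<lambda>k. E_coeff (eta u) k * t ^ k)"
  shows "Li u t = E_series (eta u) t"
proof -
  define f where "f = (\<lambda>(k::nat, ks). t ^ k * Li_weight u ks)"
  have fibre: "((\<lambda>ks. f (k, ks)) has_sum E_coeff (eta u) k * t ^ k) (Li_index_hd u k)" for k
  proof (rule has_sum_finiteI[OF finite_Li_index_hd])
    have "sum (\<lambda>ks. f (k, ks)) (Li_index_hd u k) = t ^ k * sum (Li_weight u) (Li_index_hd u k)"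
      by (simp add: f_def sum_distrib_left)
    then show "E_coeff (eta u) k * t ^ k = sum (\<lambda>ks. f (k, ks)) (Li_index_hd u k)"
      using sum_Li_weight_Li_index_hd[OF u, of k] by simp
  qed
  have total: "((\<lambda>k. E_coeff (eta u) k * t ^ k) has_sum E_series (eta u) t) UNIV"
    unfolding E_series_def
    by (rule sums_nonneg_imp_has_sum) (use converges E_coeff_nonneg t in \<open>auto intro: summable_sums\<close>)
  have "f summable_on Sigma UNIV (Li_index_hd u)"
    by (rule summable_on_SigmaI[OF fibre])
      (use total t Li_weight_nonneg in \<open>auto simp: f_def intro: has_sum_imp_summable\<close>)
  then have "(f has_sum E_series (eta u) t) (Sigma UNIV (Li_index_hd u))"
    by (rule has_sum_SigmaI[OF fibre total])
  moreover have "bij_betw (\<lambda>ks. (hd ks, ks)) (Li_index u) (Sigma UNIV (Li_index_hd u))"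
    unfolding bij_betw_def inj_on_def Li_index_hd_def by auto
  ultimately have "((\<lambda>ks. f (hd ks, ks)) has_sum E_series (eta u) t) (Li_index u)"
    using has_sum_reindex_bij_betw by blast
  then have "((\<lambda>ks. t ^ hd ks * Li_weight u ks) has_sum E_series (eta u) t) (Li_index u)"
    by (simp add: f_def)
  then show ?thesis
    using u unfolding Li_def Li_index_def Li_weight_def by (simp add: infsumI)
qed

section \<open>A factorial bound for the coefficients of \<open>E\<^bsub>\<eta>\<^sub>s\<^sup>n\<^esub>\<close>\<close>

definition E_coeff_sum :: "word \<Rightarrow> nat \<Rightarrow> real" where
  "E_coeff_sum w k = (\<Sum>j<k. E_coeff w j)"

lemma E_coeff_sum_nonneg: "0 \<le> E_coeff_sum w k"
  unfolding E_coeff_sum_def by (rule sum_nonneg) (simp add: E_coeff_nonneg)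

lemma E_coeff_sum_mono: "k \<le> k' \<Longrightarrow> E_coeff_sum w k \<le> E_coeff_sum w k'"
  unfolding E_coeff_sum_def by (rule sum_mono2) (auto simp: E_coeff_nonneg)

lemma E_coeff_replicate_X0_X1:
  "E_coeff (replicate m X0 @ X1 # v) j = E_coeff_sum v j / real j ^ Suc m"
  by (cases "j = 0") (simp_all add: E_coeff_replicate_X0 E_coeff_sum_def)

lemma harm_pred_eq_sum: "harm (k - 1) = (\<Sum>j<k. 1 / real j :: real)"
proof (cases k)
  case (Suc p)
  show ?thesis
    unfolding Suc sum.lessThan_Suc_shift by (simp add: harm_altdef inverse_eq_divide)
qed (simp add: harm_def)

lemma E_coeff_sum_eta_append_le:
  "\<forall>q\<in>set u. q \<ge> 1 \<Longrightarrow> E_coeff_sum (eta u @ w) k \<le> harm (k - 1) ^ length u * E_coeff_sum w k"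
proof (induction u)
  case Nil
  then show ?case by (simp add: eta_def)
next
  case (Cons q u)
  have q: "q \<ge> 1" using Cons.prems by auto
  then obtain p where p: "q = Suc p" by (cases q) auto
  define v where "v = eta u @ w"
  have "E_coeff_sum (eta (q # u) @ w) k = (\<Sum>j<k. E_coeff (replicate p X0 @ X1 # v) j)"
    by (simp add: E_coeff_sum_def eta_Cons v_def p)
  also have "\<dots> = (\<Sum>j<k. E_coeff_sum v j / real j ^ q)"
    by (simp add: E_coeff_replicate_X0_X1 p)
  also have "\<dots> \<le> (\<Sum>j<k. 1 / real j * E_coeff_sum v k)"
  proof (rule sum_mono)
    fix j
    assume j: "j \<in> {..<k}"
    show "E_coeff_sum v j / real j ^ q \<le> 1 / real j * E_coeff_sum v k"
    proof (cases "j = 0")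
      case False
      have "E_coeff_sum v j \<le> E_coeff_sum v k" using j by (intro E_coeff_sum_mono) auto
      moreover have "real j \<le> real j ^ q" using False q by (simp add: self_le_power)
      ultimately show ?thesis
        using False E_coeff_sum_nonneg[of v j] by (simp add: frac_le)
    qed (simp add: E_coeff_sum_def)
  qed
  also have "\<dots> = harm (k - 1) * E_coeff_sum v k"
    by (simp only: harm_pred_eq_sum sum_distrib_right)
  also have "\<dots> \<le> harm (k - 1) * (harm (k - 1) ^ length u * E_coeff_sum w k)"
    using Cons v_def by (intro mult_left_mono) (auto simp: harm_nonneg)
  finally show ?case by simp
qed

lemma power_Suc_add_ge:
  fixes x y :: real
  assumes "0 \<le> x" "0 \<le> y"
  shows "x ^ Suc n + real (Suc n) * x ^ n * y \<le> (x + y) ^ Suc n"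
proof (induction n)
  case 0
  then show ?case by simp
next
  case (Suc n)
  have "x ^ Suc (Suc n) + real (Suc (Suc n)) * x ^ Suc n * y
      \<le> x * (x ^ Suc n + real (Suc n) * x ^ n * y) + y * x ^ Suc n"
    using assms by (simp add: algebra_simps)
  also have "\<dots> \<le> x * (x + y) ^ Suc n + y * (x + y) ^ Suc n"
    using Suc assms by (intro add_mono mult_left_mono power_mono) auto
  also have "\<dots> = (x + y) ^ Suc (Suc n)" by (simp add: algebra_simps)
  finally show ?case .
qed

text \<open>The discrete form of \<open>\<integral>\<^sub>0\<^sup>x F' F\<^sup>n = F(x)\<^sup>n\<^sup>+\<^sup>1/(n+1)\<close>; iterated, it is the source of the \<open>1/n!\<close>.\<close>

lemma sum_mult_power_partial_sums_le:
  fixes f :: "nat \<Rightarrow> real"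
  assumes "\<And>j. 0 \<le> f j"
  shows "(\<Sum>j<k. f j * (\<Sum>i<j. f i) ^ n) \<le> (\<Sum>i<k. f i) ^ Suc n / real (Suc n)"
proof (induction k)
  case 0
  then show ?case by simp
next
  case (Suc k)
  define x where "x = (\<Sum>i<k. f i)"
  have x: "0 \<le> x" unfolding x_def by (rule sum_nonneg) (use assms in auto)
  have "(\<Sum>j<Suc k. f j * (\<Sum>i<j. f i) ^ n) \<le> x ^ Suc n / real (Suc n) + f k * x ^ n"
    using Suc by (simp add: x_def)
  also have "\<dots> = (x ^ Suc n + real (Suc n) * x ^ n * f k) / real (Suc n)"
    by (simp add: field_simps)
  also have "\<dots> \<le> (x + f k) ^ Suc n / real (Suc n)"
    using power_Suc_add_ge[OF x assms[of k], of n] by (intro divide_right_mono) auto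
  also have "\<dots> = (\<Sum>i<Suc k. f i) ^ Suc n / real (Suc n)" by (simp add: x_def)
  finally show ?case .
qed

lemma harm_le_one_plus_ln: "k \<ge> 1 \<Longrightarrow> harm k \<le> 1 + ln (real k)"
proof -
  assume "k \<ge> 1"
  then obtain p where k: "k = Suc p" by (cases k) auto
  have "harm (Suc p) - ln (real (Suc p)) \<le> harm (Suc 0) - ln (real (Suc 0))"
    using monotone_onD[OF decseq_harm_diff_ln, of 0 p] by simp
  then show ?thesis unfolding k by (simp add: harm_altdef)
qed

lemma ln_le_powr_div: "(x::real) \<ge> 1 \<Longrightarrow> \<epsilon> > 0 \<Longrightarrow> ln x \<le> x powr \<epsilon> / \<epsilon>"
proof -
  assume x: "x \<ge> 1" and \<epsilon>: "\<epsilon> > 0"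
  have "ln (x powr \<epsilon>) \<le> x powr \<epsilon> - 1" using x by (intro ln_le_minus_one) auto
  then have "\<epsilon> * ln x \<le> x powr \<epsilon>" by (simp add: ln_powr)
  then show ?thesis using \<epsilon> by (simp add: field_simps)
qed

lemma harm_power_le_sqrt:
  fixes m :: nat
  defines "\<epsilon> \<equiv> 1 / (2 * (real m + 1))"
  assumes k: "k \<ge> 1"
  shows "harm k ^ m \<le> (1 + 1 / \<epsilon>) ^ m * real k powr (1/2)"
proof -
  have \<epsilon>: "\<epsilon> > 0" unfolding \<epsilon>_def by simp
  have x: "real k \<ge> 1" using k by simp
  have "harm k \<le> 1 + real k powr \<epsilon> / \<epsilon>"
    using harm_le_one_plus_ln[OF k] ln_le_powr_div[OF x \<epsilon>] by simp
  also have "\<dots> \<le> (1 + 1 / \<epsilon>) * real k powr \<epsilon>"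
    using x \<epsilon> ge_one_powr_ge_zero[OF x, of \<epsilon>] by (simp add: field_simps)
  finally have "harm k ^ m \<le> ((1 + 1 / \<epsilon>) * real k powr \<epsilon>) ^ m"
    by (rule power_mono[OF _ harm_nonneg])
  also have "\<dots> = (1 + 1 / \<epsilon>) ^ m * real k powr (real m * \<epsilon>)"
    using x by (simp add: power_mult_distrib powr_power)
  also have "\<dots> \<le> (1 + 1 / \<epsilon>) ^ m * real k powr (1/2)"
  proof (rule mult_left_mono)
    have "real m * \<epsilon> \<le> 1/2" unfolding \<epsilon>_def by (simp add: field_simps)
    then show "real k powr (real m * \<epsilon>) \<le> real k powr (1/2)" using x by (rule powr_mono)
  qed (use \<epsilon> in simp)
  finally show ?thesis .
qed

definition block_bound :: "nat \<Rightarrow> nat \<Rightarrow> real" where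
  "block_bound m k = harm (k - 1) ^ m / real k ^ 2"

lemma block_bound_nonneg: "0 \<le> block_bound m k"
  unfolding block_bound_def by (simp add: harm_nonneg)

lemma summable_block_bound: "summable (block_bound m)"
proof -
  define C where "C = (1 + 2 * (real m + 1)) ^ m"
  have bound: "norm (block_bound m n) \<le> C * real n powr (-3/2)" if "n \<ge> 1" for n
  proof -
    have n: "real n > 0" using that by simp
    have "harm (n - 1) ^ m \<le> (harm n ^ m :: real)"
      by (intro power_mono) (simp_all add: harm_mono harm_nonneg)
    also have "\<dots> \<le> C * real n powr (1/2)"
      using harm_power_le_sqrt[OF that, of m] by (simp add: C_def)
    finally have "block_bound m n \<le> C * real n powr (1/2) / real n ^ 2"
      using n by (simp add: block_bound_def divide_right_mono)
    also have "\<dots> = C * real n powr (-3/2)"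
    proof -
      have "real n powr (1/2) / real n powr 2 = real n powr (1/2 - 2)"
        by (rule powr_diff[symmetric])
      then show ?thesis
        using n by (simp add: powr_numeral times_divide_eq_right[symmetric])
    qed
    finally show ?thesis using block_bound_nonneg[of m n] by simp
  qed
  show ?thesis
  proof (rule summable_comparison_test)
    show "\<exists>N. \<forall>n\<ge>N. norm (block_bound m n) \<le> C * real n powr (-3/2)"
      using bound by blast
    show "summable (\<lambda>n. C * real n powr (-3/2))"
      by (intro summable_mult) (simp add: summable_real_powr_iff)
  qed
qed

section \<open>The generating series \<open>\<L>\<^sub>s\<close>\<close>

locale admissible_index =
  fixes s :: "nat list"
  assumes admissible: "admissible s"
begin

lemma positive: "\<forall>k\<in>set s. k \<ge> 1"
  using admissible unfolding admissible_def by auto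

lemma nonempty: "s \<noteq> []"
  using admissible unfolding admissible_def by auto

lemma eta_ne_Nil: "eta s \<noteq> []"
  using eta_eq_Nil_iff[OF positive] nonempty by simp

lemma E_coeff_list_pow_Suc_le:
  "E_coeff (list_pow (eta s) (Suc n)) k
     \<le> block_bound (length s - 1) k * E_coeff_sum (list_pow (eta s) n) k"
proof -
  obtain q u where s: "s = q # u" using nonempty by (cases s) auto
  have "q \<ge> 2" using admissible s unfolding admissible_def by auto
  then obtain p where p: "q = Suc p" by (cases q) auto
  have u: "\<forall>k\<in>set u. k \<ge> 1" using positive s by auto
  define v where "v = list_pow (eta s) n"
  have "E_coeff (list_pow (eta s) (Suc n)) k = E_coeff_sum (eta u @ v) k / real k ^ q"
    unfolding list_pow_Suc v_def[symmetric]
    by (simp add: s eta_Cons p E_coeff_replicate_X0_X1)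
  also have "\<dots> \<le> harm (k - 1) ^ length u * E_coeff_sum v k / real k ^ 2"
  proof (cases "k = 0")
    case False
    have "real k ^ 2 \<le> real k ^ q" using False \<open>q \<ge> 2\<close> by (intro power_increasing) auto
    moreover have "0 \<le> harm (k - 1) ^ length u * E_coeff_sum v k"
      by (simp add: harm_nonneg E_coeff_sum_nonneg)
    ultimately show ?thesis
      using False E_coeff_sum_eta_append_le[OF u] E_coeff_sum_nonneg[of "eta u @ v" k]
      by (intro frac_le) auto
  qed (simp add: E_coeff_sum_def)
  also have "\<dots> = block_bound (length s - 1) k * E_coeff_sum v k"
    by (simp add: block_bound_def s)
  finally show ?thesis unfolding v_def .
qed

lemma E_coeff_sum_list_pow_le:
  "E_coeff_sum (list_pow (eta s) n) k \<le> (\<Sum>j<k. block_bound (length s - 1) j) ^ n / fact n"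
proof (induction n arbitrary: k)
  case 0
  show ?case by (cases k) (simp_all add: E_coeff_sum_def sum.lessThan_Suc_shift)
next
  case (Suc n)
  define f where "f = block_bound (length s - 1)"
  have f: "0 \<le> f j" for j unfolding f_def by (rule block_bound_nonneg)
  have "E_coeff_sum (list_pow (eta s) (Suc n)) k \<le> (\<Sum>j<k. f j * E_coeff_sum (list_pow (eta s) n) j)"
    unfolding E_coeff_sum_def[of "list_pow (eta s) (Suc n)"] f_def
    by (rule sum_mono) (rule E_coeff_list_pow_Suc_le)
  also have "\<dots> \<le> (\<Sum>j<k. f j * ((\<Sum>i<j. f i) ^ n / fact n))"
    by (intro sum_mono mult_left_mono f) (use Suc f_def in simp)
  also have "\<dots> = (\<Sum>j<k. f j * (\<Sum>i<j. f i) ^ n) / fact n"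
    by (simp add: sum_divide_distrib)
  also have "\<dots> \<le> (\<Sum>i<k. f i) ^ Suc n / real (Suc n) / fact n"
    by (intro divide_right_mono sum_mult_power_partial_sums_le f) simp
  also have "\<dots> = (\<Sum>i<k. f i) ^ Suc n / fact (Suc n)"
    by (simp add: field_simps)
  finally show ?case by (simp add: f_def)
qed

definition block_bound_sum :: real where
  "block_bound_sum = (\<Sum>k. block_bound (length s - 1) k)"

lemma E_coeff_sum_list_pow_le_fact:
  "E_coeff_sum (list_pow (eta s) n) k \<le> block_bound_sum ^ n / fact n"
proof -
  have "(\<Sum>j<k. block_bound (length s - 1) j) \<le> block_bound_sum"
    unfolding block_bound_sum_def
    by (rule sum_le_suminf[OF summable_block_bound]) (auto simp: block_bound_nonneg)
  then have "(\<Sum>j<k. block_bound (length s - 1) j) ^ n \<le> block_bound_sum ^ n"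
    by (rule power_mono) (simp add: sum_nonneg block_bound_nonneg)
  then show ?thesis
    using E_coeff_sum_list_pow_le[of n k] by (meson divide_right_mono fact_ge_zero order_trans)
qed

lemma summable_E_coeff_list_pow: "summable (E_coeff (list_pow (eta s) n))"
  by (rule summableI_nonneg_bounded[of _ "block_bound_sum ^ n / fact n"])
    (use E_coeff_nonneg E_coeff_sum_list_pow_le_fact in \<open>auto simp: E_coeff_sum_def\<close>)

lemma E_series_list_pow_bounds:
  assumes t: "0 \<le> t" "t \<le> 1"
  shows "summable (\<lambda>k. E_coeff (list_pow (eta s) n) k * t ^ k)"
    and "0 \<le> E_series (list_pow (eta s) n) t"
    and "E_series (list_pow (eta s) n) t \<le> block_bound_sum ^ n / fact n"
proof -
  let ?a = "E_coeff (list_pow (eta s) n)"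
  have le: "?a k * t ^ k \<le> ?a k" and nonneg: "0 \<le> ?a k * t ^ k" for k
    using t E_coeff_nonneg[of "list_pow (eta s) n" k] by (simp_all add: mult_left_le power_le_one)
  show converges: "summable (\<lambda>k. ?a k * t ^ k)"
    by (rule summable_comparison_test[OF _ summable_E_coeff_list_pow]) (use le nonneg in auto)
  show "0 \<le> E_series (list_pow (eta s) n) t"
    unfolding E_series_def by (rule suminf_nonneg[OF converges nonneg])
  have "E_series (list_pow (eta s) n) t \<le> suminf ?a"
    unfolding E_series_def by (rule suminf_le[OF le converges summable_E_coeff_list_pow])
  also have "\<dots> \<le> block_bound_sum ^ n / fact n"
    by (rule suminf_le_const[OF summable_E_coeff_list_pow])
      (use E_coeff_sum_list_pow_le_fact in \<open>auto simp: E_coeff_sum_def\<close>)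
  finally show "E_series (list_pow (eta s) n) t \<le> block_bound_sum ^ n / fact n" .
qed

lemma Li_rep_eq_E_series:
  assumes t: "0 \<le> t" "t \<le> 1"
  shows "Li (rep n s) t = E_series (list_pow (eta s) n) t"
proof (cases n)
  case 0
  then show ?thesis by (simp add: Li_def rep_def E_series_Nil)
next
  case (Suc m)
  have "rep n s \<noteq> []" using Suc nonempty by (simp add: rep_def)
  moreover have "\<forall>q\<in>set (rep n s). q \<ge> 1" using positive by (auto simp: rep_def)
  ultimately show ?thesis
    using Li_eq_E_series E_series_list_pow_bounds(1)[OF t] t by (simp add: eta_rep)
qed

lemma E_list_pow_eq_E_series:
  assumes t: "0 \<le> t" "t \<le> 1"
  shows "E (list_pow (eta s) n) t = E_series (list_pow (eta s) n) t"
proof -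
  have ends: "ends_in_X1 (list_pow (eta s) n)"
    using ends_in_X1_eta[of "rep n s"] by (simp add: eta_rep)
  consider "t < 1" | "t = 1" "n = 0" | "t = 1" "n > 0" using t by linarith
  then show ?thesis
  proof cases
    case 1
    then show ?thesis using E_eq_E_series[OF ends] t by simp
  next
    case 2
    then show ?thesis by (simp add: E_series_Nil)
  next
    case 3
    then have "list_pow (eta s) n \<noteq> []"
      using eta_ne_Nil by (cases n) (auto simp: list_pow_Suc)
    then show ?thesis
      using E_1_eq_E_series[OF ends] summable_E_coeff_list_pow 3 by simp
  qed
qed

lemma Lcal_has_sum:
  assumes t: "0 \<le> t" "t \<le> 1"
  shows "((\<lambda>n. Li (rep n s) t * \<theta> ^ (n * weight s)) has_sum Lcal s t \<theta>) UNIV"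
proof -
  let ?g = "\<lambda>n. Li (rep n s) t * \<theta> ^ (n * weight s)"
  have bound: "norm (?g n) \<le> (block_bound_sum * \<bar>\<theta>\<bar> ^ weight s) ^ n / fact n" for n
  proof -
    have "norm (?g n) = E_series (list_pow (eta s) n) t * (\<bar>\<theta>\<bar> ^ weight s) ^ n"
      using Li_rep_eq_E_series[OF t, of n] E_series_list_pow_bounds(2)[OF t, of n]
      by (simp add: abs_mult power_abs power_mult mult.commute[of n])
    also have "\<dots> \<le> block_bound_sum ^ n / fact n * (\<bar>\<theta>\<bar> ^ weight s) ^ n"
      by (rule mult_right_mono) (use E_series_list_pow_bounds(3)[OF t, of n] in auto)
    finally show ?thesis by (simp add: power_mult_distrib)
  qed
  have "summable (\<lambda>n. (block_bound_sum * \<bar>\<theta>\<bar> ^ weight s) ^ n / fact n)"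
    using summable_exp[of "block_bound_sum * \<bar>\<theta>\<bar> ^ weight s"]
    by (simp add: divide_inverse mult.commute)
  then have norm_summable: "summable (\<lambda>n. norm (?g n))"
    by (rule summable_comparison_test[rotated]) (use bound in auto)
  show ?thesis
    unfolding Lcal_def
    by (rule norm_summable_imp_has_sum[OF norm_summable summable_sums[OF summable_norm_cancel]])
      (rule norm_summable)
qed

theorem Fc_has_value_Lcal:
  assumes t: "0 \<le> t" "t \<le> 1"
  shows "Fc_has_value (c_s \<theta> s) t (Lcal s t \<theta>)"
proof -
  let ?f = "\<lambda>w. c_s \<theta> s w * E w t"
  have "(?f \<circ> list_pow (eta s)) n = Li (rep n s) t * \<theta> ^ (n * weight s)" for n
    using c_s_list_pow[OF eta_ne_Nil] Li_rep_eq_E_series[OF t] E_list_pow_eq_E_series[OF t]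
    by (simp add: power_mult mult.commute[of n])
  then have "(?f \<circ> list_pow (eta s) has_sum Lcal s t \<theta>) UNIV"
    using Lcal_has_sum[OF t] by (simp add: comp_def)
  moreover have "inj (list_pow (eta s))"
    using list_pow_inject[OF eta_ne_Nil] by (auto simp: inj_def)
  ultimately have "(?f has_sum Lcal s t \<theta>) (range (list_pow (eta s)))"
    by (simp add: has_sum_reindex)
  moreover have "?f w = 0" if "w \<notin> range (list_pow (eta s))" for w
    using c_s_eq_0[OF that] by simp
  ultimately show ?thesis
    unfolding Fc_has_value_def by (subst has_sum_cong_neutral[of "range (list_pow (eta s))"]) auto
qed

end

theorem theorem1:
  fixes s :: "nat list" and \<theta> :: real
  assumes "admissible s"
  shows "linear_rep (c_s \<theta> s) (weight s)
           (\<lambda>x. case x of X0 \<Rightarrow> N0 s | X1 \<Rightarrow> N1 \<theta> s)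
           (e (weight s) 1) (e (weight s) 1)
       \<and> (\<forall>t\<in>{0..1}. Fc_has_value (c_s \<theta> s) t (Lcal s t \<theta>))"
proof
  interpret admissible_index s using assms by unfold_locales
  show "linear_rep (c_s \<theta> s) (weight s) (\<lambda>x. case x of X0 \<Rightarrow> N0 s | X1 \<Rightarrow> N1 \<theta> s)
      (e (weight s) 1) (e (weight s) 1)"
    using linear_rep_c_s[OF positive nonempty] unfolding letter_mat_def .
  show "\<forall>t\<in>{0..1}. Fc_has_value (c_s \<theta> s) t (Lcal s t \<theta>)"
    using Fc_has_value_Lcal by simp
qed

end
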